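(* Let $\Gamma$ be a set of axioms. Then $\mathsf{ICK}\oplus\Gamma$ is sound and complete with respect to the class of general frames that validate $\Gamma$.
   Context: Formulas are generated by $\phi ::= p\mid\bot\mid\phi\wedge\phi\mid\phi\vee\phi\mid\phi\to\phi\mid\phi\mathrel{\Box\!\!\!\rightarrow}\phi$. $\mathsf{ICK}\oplus\Gamma$ is the smallest set of formulas containing intuitionistic propositional logic, $\Gamma$, $(p\mathrel{\Box\!\!\!\rightarrow}(q\wedge r))\leftrightarrow((p\mathrel{\Box\!\!\!\rightarrow} q)\wedge(p\mathrel{\Box\!\!\!\rightarrow} r))$ and $(p\mathrel{\Box\!\!\!\rightarrow}\top)\leftrightarrow\top$, closed under uniform substitution, modus ponens, and the congruence rules for both arguments of $\mathrel{\Box\!\!\!\rightarrow}$. A general frame is $(X,\leq,\mathcal{R},A)$ with $(X,\leq)$ a poset, $A$ a collection of upsets containing $X,\emptyset$ and closed under $\cap,\cup$, $a\to b=\{x\mid{\uparrow}x\cap a\subseteq b\}$ and $a\Rightarrow_c b=\{x\mid R_a[x]\subseteq b\}$, and $\mathcal{R}=\{R_a\mid a\in A\}$ relations with $(\leq\circ R_a)\subseteq(R_a\circ\leq)$. Validity is with respect to valuations into $A$, with $x\models\phi\mathrel{\Box\!\!\!\rightarrow}\psi$ iff every $y$ with $xR_{V(\phi)}y$ satisfies $\psi$. *)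

theory Defs
  imports Main
begin

datatype fm = Var nat | Bot | And fm fm | Or fm fm | Imp fm fm | Cond fm fm

definition Top :: fm where "Top = Imp Bot Bot"
definition Iff :: "fm \<Rightarrow> fm \<Rightarrow> fm" where "Iff a b = And (Imp a b) (Imp b a)"

fun subst :: "(nat \<Rightarrow> fm) \<Rightarrow> fm \<Rightarrow> fm" where
  "subst s (Var n) = s n"
| "subst s Bot = Bot"
| "subst s (And a b) = And (subst s a) (subst s b)"
| "subst s (Or a b) = Or (subst s a) (subst s b)"
| "subst s (Imp a b) = Imp (subst s a) (subst s b)"
| "subst s (Cond a b) = Cond (subst s a) (subst s b)"

text \<open>Standard Hilbert-style axioms of intuitionistic propositional logic
  (in the variables p = Var 0, q = Var 1, r = Var 2); together with uniform
  substitution and modus ponens they generate IPC in the extended language.\<close>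

definition ipc_axioms :: "fm set" where
  "ipc_axioms = (let p = Var 0; q = Var 1; r = Var 2 in
    { Imp p (Imp q p),
      Imp (Imp p (Imp q r)) (Imp (Imp p q) (Imp p r)),
      Imp (And p q) p,
      Imp (And p q) q,
      Imp p (Imp q (And p q)),
      Imp p (Or p q),
      Imp q (Or p q),
      Imp (Imp p r) (Imp (Imp q r) (Imp (Or p q) r)),
      Imp Bot p })"

definition ick_axioms :: "fm set" where
  "ick_axioms = (let p = Var 0; q = Var 1; r = Var 2 in
    { Iff (Cond p (And q r)) (And (Cond p q) (Cond p r)),
      Iff (Cond p Top) Top })"

inductive_set ICK :: "fm set \<Rightarrow> fm set" for \<Gamma> :: "fm set" where
  ipc: "\<phi> \<in> ipc_axioms \<Longrightarrow> \<phi> \<in> ICK \<Gamma>"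
| gamma: "\<phi> \<in> \<Gamma> \<Longrightarrow> \<phi> \<in> ICK \<Gamma>"
| ick: "\<phi> \<in> ick_axioms \<Longrightarrow> \<phi> \<in> ICK \<Gamma>"
| us: "\<phi> \<in> ICK \<Gamma> \<Longrightarrow> subst s \<phi> \<in> ICK \<Gamma>"
| mp: "\<phi> \<in> ICK \<Gamma> \<Longrightarrow> Imp \<phi> \<psi> \<in> ICK \<Gamma> \<Longrightarrow> \<psi> \<in> ICK \<Gamma>"
| cong_left: "Iff \<phi> \<psi> \<in> ICK \<Gamma> \<Longrightarrow> Iff (Cond \<phi> \<chi>) (Cond \<psi> \<chi>) \<in> ICK \<Gamma>"
| cong_right: "Iff \<phi> \<psi> \<in> ICK \<Gamma> \<Longrightarrow> Iff (Cond \<chi> \<phi>) (Cond \<chi> \<psi>) \<in> ICK \<Gamma>"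

text \<open>A general frame (X, le, R, A): R a is the relation R_a (relevant for a in A).\<close>

definition upset :: "'w set \<Rightarrow> ('w \<Rightarrow> 'w \<Rightarrow> bool) \<Rightarrow> 'w set \<Rightarrow> bool" where
  "upset X le a \<longleftrightarrow> a \<subseteq> X \<and> (\<forall>x\<in>a. \<forall>y\<in>X. le x y \<longrightarrow> y \<in> a)"

definition impl :: "'w set \<Rightarrow> ('w \<Rightarrow> 'w \<Rightarrow> bool) \<Rightarrow> 'w set \<Rightarrow> 'w set \<Rightarrow> 'w set" where
  "impl X le a b = {x \<in> X. \<forall>y\<in>X. le x y \<and> y \<in> a \<longrightarrow> y \<in> b}"

definition cimpl :: "'w set \<Rightarrow> ('w set \<Rightarrow> 'w \<Rightarrow> 'w \<Rightarrow> bool) \<Rightarrow> 'w set \<Rightarrow> 'w set \<Rightarrow> 'w set" where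
  "cimpl X R a b = {x \<in> X. \<forall>y. R a x y \<longrightarrow> y \<in> b}"

definition general_frame ::
  "'w set \<Rightarrow> ('w \<Rightarrow> 'w \<Rightarrow> bool) \<Rightarrow> ('w set \<Rightarrow> 'w \<Rightarrow> 'w \<Rightarrow> bool) \<Rightarrow> 'w set set \<Rightarrow> bool" where
  "general_frame X le R A \<longleftrightarrow>
     (\<forall>x\<in>X. le x x) \<and>
     (\<forall>x\<in>X. \<forall>y\<in>X. le x y \<and> le y x \<longrightarrow> x = y) \<and>
     (\<forall>x\<in>X. \<forall>y\<in>X. \<forall>z\<in>X. le x y \<and> le y z \<longrightarrow> le x z) \<and>
     (\<forall>a\<in>A. upset X le a) \<and> X \<in> A \<and> {} \<in> A \<and>
     (\<forall>a\<in>A. \<forall>b\<in>A. a \<inter> b \<in> A \<and> a \<union> b \<in> A \<and> impl X le a b \<in> A \<and> cimpl X R a b \<in> A) \<and>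
     (\<forall>a\<in>A. \<forall>x y. R a x y \<longrightarrow> x \<in> X \<and> y \<in> X) \<and>
     (\<forall>a\<in>A. \<forall>x\<in>X. \<forall>y\<in>X. \<forall>z\<in>X. le x y \<and> R a y z \<longrightarrow> (\<exists>w\<in>X. R a x w \<and> le w z))"

fun tset :: "'w set \<Rightarrow> ('w \<Rightarrow> 'w \<Rightarrow> bool) \<Rightarrow> ('w set \<Rightarrow> 'w \<Rightarrow> 'w \<Rightarrow> bool)
    \<Rightarrow> (nat \<Rightarrow> 'w set) \<Rightarrow> fm \<Rightarrow> 'w set" where
  "tset X le R V (Var n) = V n"
| "tset X le R V Bot = {}"
| "tset X le R V (And a b) = tset X le R V a \<inter> tset X le R V b"
| "tset X le R V (Or a b) = tset X le R V a \<union> tset X le R V b"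
| "tset X le R V (Imp a b) = impl X le (tset X le R V a) (tset X le R V b)"
| "tset X le R V (Cond a b) = cimpl X R (tset X le R V a) (tset X le R V b)"

definition valid_in ::
  "'w set \<Rightarrow> ('w \<Rightarrow> 'w \<Rightarrow> bool) \<Rightarrow> ('w set \<Rightarrow> 'w \<Rightarrow> 'w \<Rightarrow> bool) \<Rightarrow> 'w set set \<Rightarrow> fm \<Rightarrow> bool" where
  "valid_in X le R A \<phi> \<longleftrightarrow> (\<forall>V. (\<forall>n. V n \<in> A) \<longrightarrow> tset X le R V \<phi> = X)"

end

theory Submission
  imports Defs
begin

text \<open>Soundness is an induction over derivations in \<open>ICK \<Gamma>\<close>: every formula denotes an
  admissible upset, and the congruence rules are sound because the relation \<open>R a\<close> is indexed
  by the admissible set \<open>a\<close> rather than by a formula defining it.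

  Completeness goes through the canonical general frame: the worlds are the prime theories
  ordered by inclusion, the admissible sets are the sets \<open>[\<psi>]\<close> of prime theories containing
  some formula \<open>\<psi>\<close>, and \<open>D\<close> sees \<open>E\<close> along \<open>[\<psi>]\<close> iff \<open>Cond \<psi> \<chi> \<in> D\<close> implies
  \<open>\<chi> \<in> E\<close>. The left congruence rule makes this independent of the choice of \<open>\<psi>\<close>, and
  Lindenbaum's lemma gives the truth lemma \<open>[Cond \<psi> \<chi>] = [\<psi>] \<Rightarrow>\<^sub>c [\<chi>]\<close>. Since every
  admissible valuation is induced by a substitution, closure of \<open>ICK \<Gamma>\<close> under substitution
  makes the canonical frame validate \<open>\<Gamma>\<close>, while it refutes every non-theorem.\<close>

section \<open>Derived rules of ICK\<close>

lemma ICK_K: "Imp a (Imp b a) \<in> ICK \<Gamma>"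
  and ICK_S: "Imp (Imp a (Imp b c)) (Imp (Imp a b) (Imp a c)) \<in> ICK \<Gamma>"
  and ICK_conj1: "Imp (And a b) a \<in> ICK \<Gamma>"
  and ICK_conj2: "Imp (And a b) b \<in> ICK \<Gamma>"
  and ICK_conjI: "Imp a (Imp b (And a b)) \<in> ICK \<Gamma>"
  and ICK_disj1: "Imp a (Or a b) \<in> ICK \<Gamma>"
  and ICK_disj2: "Imp b (Or a b) \<in> ICK \<Gamma>"
  and ICK_disjE: "Imp (Imp a c) (Imp (Imp b c) (Imp (Or a b) c)) \<in> ICK \<Gamma>"
  and ICK_Bot: "Imp Bot a \<in> ICK \<Gamma>"
proof -
  have "subst ((!) [a, b, c]) ` ipc_axioms \<subseteq> ICK \<Gamma>"
    using ICK.ipc ICK.us by blast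
  then show "Imp a (Imp b a) \<in> ICK \<Gamma>"
    and "Imp (Imp a (Imp b c)) (Imp (Imp a b) (Imp a c)) \<in> ICK \<Gamma>"
    and "Imp (And a b) a \<in> ICK \<Gamma>"
    and "Imp (And a b) b \<in> ICK \<Gamma>"
    and "Imp a (Imp b (And a b)) \<in> ICK \<Gamma>"
    and "Imp a (Or a b) \<in> ICK \<Gamma>"
    and "Imp b (Or a b) \<in> ICK \<Gamma>"
    and "Imp (Imp a c) (Imp (Imp b c) (Imp (Or a b) c)) \<in> ICK \<Gamma>"
    and "Imp Bot a \<in> ICK \<Gamma>"
    by (simp_all add: ipc_axioms_def Let_def numeral_2_eq_2)
qed

lemma ICK_Cond_And: "Iff (Cond a (And b c)) (And (Cond a b) (Cond a c)) \<in> ICK \<Gamma>"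
  and ICK_Cond_Top: "Iff (Cond a Top) Top \<in> ICK \<Gamma>"
proof -
  have "subst ((!) [a, b, c]) ` ick_axioms \<subseteq> ICK \<Gamma>"
    using ICK.ick ICK.us by blast
  then show "Iff (Cond a (And b c)) (And (Cond a b) (Cond a c)) \<in> ICK \<Gamma>"
    and "Iff (Cond a Top) Top \<in> ICK \<Gamma>"
    by (simp_all add: ick_axioms_def Let_def numeral_2_eq_2 Iff_def Top_def)
qed

lemma ICK_imp_refl: "Imp a a \<in> ICK \<Gamma>"
  by (meson ICK.mp ICK_K ICK_S)

text \<open>Derivability from hypotheses \<open>H\<close> uses modus ponens only; substitution and the congruence
  rules act on theorems, so that the deduction theorem holds.\<close>

inductive derives :: "fm set \<Rightarrow> fm set \<Rightarrow> fm \<Rightarrow> bool" for \<Gamma> H where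
  ICK: "\<phi> \<in> ICK \<Gamma> \<Longrightarrow> derives \<Gamma> H \<phi>"
| hyp: "\<phi> \<in> H \<Longrightarrow> derives \<Gamma> H \<phi>"
| mp: "derives \<Gamma> H \<phi> \<Longrightarrow> derives \<Gamma> H (Imp \<phi> \<psi>) \<Longrightarrow> derives \<Gamma> H \<psi>"

lemma derives_ICK_mp: "Imp a b \<in> ICK \<Gamma> \<Longrightarrow> derives \<Gamma> H a \<Longrightarrow> derives \<Gamma> H b"
  by (meson derives.ICK derives.mp)

lemma derives_deduction: "derives \<Gamma> (insert a H) b \<Longrightarrow> derives \<Gamma> H (Imp a b)"
proof (induction rule: derives.induct)
  case (ICK \<phi>)
  then show ?case by (meson ICK.mp ICK_K derives.ICK)
next
  case (hyp \<phi>)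
  then show ?case by (metis ICK_imp_refl ICK_K derives.hyp derives_ICK_mp derives.ICK insert_iff)
next
  case (mp \<phi> \<psi>)
  then show ?case by (meson ICK_S derives.mp derives_ICK_mp)
qed

lemma derives_empty_iff: "derives \<Gamma> {} \<phi> \<longleftrightarrow> \<phi> \<in> ICK \<Gamma>"
proof
  show "derives \<Gamma> {} \<phi> \<Longrightarrow> \<phi> \<in> ICK \<Gamma>"
    by (induction rule: derives.induct) (auto intro: ICK.mp)
qed (rule derives.ICK)

lemma derives_ImpI: "derives \<Gamma> {a} b \<Longrightarrow> Imp a b \<in> ICK \<Gamma>"
  using derives_deduction derives_empty_iff by blast

lemma derives_mono: "derives \<Gamma> H \<phi> \<Longrightarrow> H \<subseteq> H' \<Longrightarrow> derives \<Gamma> H' \<phi>"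
  by (induction rule: derives.induct) (auto intro: derives.intros)

lemma derives_finite_subset:
  "derives \<Gamma> H \<phi> \<Longrightarrow> \<exists>H'. finite H' \<and> H' \<subseteq> H \<and> derives \<Gamma> H' \<phi>"
proof (induction rule: derives.induct)
  case (ICK \<phi>)
  then show ?case by (auto intro: derives.ICK)
next
  case (hyp \<phi>)
  then show ?case by (intro exI[of _ "{\<phi>}"]) (auto intro: derives.hyp)
next
  case (mp \<phi> \<psi>)
  then obtain H1 H2 where "finite H1" "H1 \<subseteq> H" "derives \<Gamma> H1 \<phi>"
    and "finite H2" "H2 \<subseteq> H" "derives \<Gamma> H2 (Imp \<phi> \<psi>)"
    by blast
  then show ?case by (intro exI[of _ "H1 \<union> H2"]) (auto intro: derives.mp derives_mono)
qed

lemma ICK_imp_trans: "Imp a b \<in> ICK \<Gamma> \<Longrightarrow> Imp b c \<in> ICK \<Gamma> \<Longrightarrow> Imp a c \<in> ICK \<Gamma>"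
  by (meson derives_ImpI derives_ICK_mp derives.hyp singletonI)

lemma ICK_mp_conj: "Imp (And a (Imp a b)) b \<in> ICK \<Gamma>"
proof (rule derives_ImpI)
  have "derives \<Gamma> {And a (Imp a b)} (And a (Imp a b))" by (simp add: derives.hyp)
  then show "derives \<Gamma> {And a (Imp a b)} b"
    by (meson ICK_conj1 ICK_conj2 derives_ICK_mp derives.mp)
qed

lemma ICK_IffI: "Imp a b \<in> ICK \<Gamma> \<Longrightarrow> Imp b a \<in> ICK \<Gamma> \<Longrightarrow> Iff a b \<in> ICK \<Gamma>"
  unfolding Iff_def using ICK.mp ICK_conjI by blast

lemma ICK_IffD1: "Iff a b \<in> ICK \<Gamma> \<Longrightarrow> Imp a b \<in> ICK \<Gamma>"
  and ICK_IffD2: "Iff a b \<in> ICK \<Gamma> \<Longrightarrow> Imp b a \<in> ICK \<Gamma>"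
  unfolding Iff_def using ICK.mp ICK_conj1 ICK_conj2 by blast+

text \<open>Monotonicity in the consequent: \<open>a\<close> is equivalent to \<open>And a b\<close>, so right congruence and
  the distribution axiom turn \<open>Cond c a\<close> into \<open>Cond c b\<close>.\<close>

lemma ICK_Cond_mono: "Imp a b \<in> ICK \<Gamma> \<Longrightarrow> Imp (Cond c a) (Cond c b) \<in> ICK \<Gamma>"
proof -
  assume "Imp a b \<in> ICK \<Gamma>"
  then have "Imp a (And a b) \<in> ICK \<Gamma>"
    by (meson ICK_S ICK_conjI ICK_imp_refl ICK.mp)
  then have "Iff a (And a b) \<in> ICK \<Gamma>"
    using ICK_IffI ICK_conj1 by blast
  then have "Imp (Cond c a) (Cond c (And a b)) \<in> ICK \<Gamma>"
    by (intro ICK_IffD1 ICK.cong_right)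
  moreover have "Imp (Cond c (And a b)) (Cond c b) \<in> ICK \<Gamma>"
    using ICK_imp_trans[OF ICK_IffD1[OF ICK_Cond_And] ICK_conj2] .
  ultimately show ?thesis
    using ICK_imp_trans by blast
qed

lemma ICK_Cond_nec: "b \<in> ICK \<Gamma> \<Longrightarrow> Cond a b \<in> ICK \<Gamma>"
proof -
  assume "b \<in> ICK \<Gamma>"
  then have "Imp (Cond a Top) (Cond a b) \<in> ICK \<Gamma>"
    by (meson ICK.mp ICK_K ICK_Cond_mono)
  moreover have "Cond a Top \<in> ICK \<Gamma>"
    using ICK_IffD2[OF ICK_Cond_Top] ICK_imp_refl ICK.mp unfolding Top_def by blast
  ultimately show ?thesis
    using ICK.mp by blast
qed

section \<open>Soundness\<close>

lemma
  assumes "general_frame X le R A"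
  shows general_frame_refl: "\<forall>x\<in>X. le x x"
    and general_frame_trans: "\<forall>x\<in>X. \<forall>y\<in>X. \<forall>z\<in>X. le x y \<and> le y z \<longrightarrow> le x z"
    and general_frame_upset: "a \<in> A \<Longrightarrow> upset X le a"
    and general_frame_closed: "{} \<in> A" "a \<in> A \<Longrightarrow> b \<in> A \<Longrightarrow> a \<inter> b \<in> A"
      "a \<in> A \<Longrightarrow> b \<in> A \<Longrightarrow> a \<union> b \<in> A" "a \<in> A \<Longrightarrow> b \<in> A \<Longrightarrow> impl X le a b \<in> A"
      "a \<in> A \<Longrightarrow> b \<in> A \<Longrightarrow> cimpl X R a b \<in> A"
    and general_frame_rel: "a \<in> A \<Longrightarrow> R a x y \<Longrightarrow> y \<in> X"
  using assms unfolding general_frame_def by blast+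

lemma tset_admissible:
  assumes "general_frame X le R A" and "\<forall>n. V n \<in> A"
  shows "tset X le R V \<phi> \<in> A"
  by (induction \<phi>) (simp_all add: assms(2) general_frame_closed[OF assms(1)])

lemma tset_subset:
  "general_frame X le R A \<Longrightarrow> \<forall>n. V n \<in> A \<Longrightarrow> tset X le R V \<phi> \<subseteq> X"
  using tset_admissible general_frame_upset unfolding upset_def by blast

lemma tset_subst: "tset X le R V (subst s \<phi>) = tset X le R (\<lambda>n. tset X le R V (s n)) \<phi>"
  by (induction \<phi>) auto

lemma impl_eq_iff_subset: "\<forall>x\<in>X. le x x \<Longrightarrow> a \<subseteq> X \<Longrightarrow> impl X le a b = X \<longleftrightarrow> a \<subseteq> b"
  unfolding impl_def by blast

lemma impl_ipc_axioms:
  assumes refl: "\<forall>x\<in>X. le x x"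
    and trans: "\<forall>x\<in>X. \<forall>y\<in>X. \<forall>z\<in>X. le x y \<and> le y z \<longrightarrow> le x z"
    and a: "upset X le a"
  shows "impl X le a (impl X le b a) = X"
    and "impl X le (impl X le a (impl X le b c)) (impl X le (impl X le a b) (impl X le a c)) = X"
    and "impl X le (a \<inter> b) a = X"
    and "impl X le (a \<inter> b) b = X"
    and "impl X le a (impl X le b (a \<inter> b)) = X"
    and "impl X le a (a \<union> b) = X"
    and "impl X le b (a \<union> b) = X"
    and "impl X le (impl X le a c) (impl X le (impl X le b c) (impl X le (a \<union> b) c)) = X"
    and "impl X le {} a = X"
  unfolding impl_def
  subgoal using a unfolding upset_def by blast
  subgoal using refl trans by blast
  subgoal by blast
  subgoal by blast
  subgoal using a unfolding upset_def by blast
  subgoal by blast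
  subgoal by blast
  subgoal using refl trans by blast
  subgoal by blast
  done

lemma impl_Int_impl_eq_iff:
  "\<forall>x\<in>X. le x x \<Longrightarrow> a \<subseteq> X \<Longrightarrow> b \<subseteq> X \<Longrightarrow> impl X le a b \<inter> impl X le b a = X \<longleftrightarrow> a = b"
  unfolding impl_def by blast

lemma valid_inD: "valid_in X le R A \<phi> \<Longrightarrow> \<forall>n. V n \<in> A \<Longrightarrow> tset X le R V \<phi> = X"
  unfolding valid_in_def by blast

lemma valid_in_Iff:
  assumes gf: "general_frame X le R A"
  shows "valid_in X le R A (Iff a b) \<longleftrightarrow>
    (\<forall>V. (\<forall>n. V n \<in> A) \<longrightarrow> tset X le R V a = tset X le R V b)"
proof -
  have "tset X le R V (Iff a b) = X \<longleftrightarrow> tset X le R V a = tset X le R V b"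
    if "\<forall>n. V n \<in> A" for V
    unfolding Iff_def tset.simps
    using impl_Int_impl_eq_iff[of X le, OF general_frame_refl[OF gf]] tset_subset[OF gf that]
    by blast
  then show ?thesis
    unfolding valid_in_def by blast
qed

lemma valid_in_ipc_axiom:
  assumes gf: "general_frame X le R A" and "\<phi> \<in> ipc_axioms"
  shows "valid_in X le R A \<phi>"
  unfolding valid_in_def
proof (intro allI impI)
  fix V :: "nat \<Rightarrow> _" assume "\<forall>n. V n \<in> A"
  then have "upset X le (V 0)"
    using general_frame_upset[OF gf] by blast
  note impl_ipc_axioms[OF general_frame_refl[OF gf] general_frame_trans[OF gf] this]
  then show "tset X le R V \<phi> = X"
    using \<open>\<phi> \<in> ipc_axioms\<close> unfolding ipc_axioms_def Let_def
    by (elim insertE emptyE) simp_all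
qed

lemma valid_in_ick_axiom:
  assumes gf: "general_frame X le R A" and "\<phi> \<in> ick_axioms"
  shows "valid_in X le R A \<phi>"
  unfolding valid_in_def
proof (intro allI impI)
  fix V :: "nat \<Rightarrow> _" assume "\<forall>n. V n \<in> A"
  then have "cimpl X R (V 0) X = X"
    using general_frame_rel[OF gf] unfolding cimpl_def by blast
  moreover have "cimpl X R a (b \<inter> c) = cimpl X R a b \<inter> cimpl X R a c" for a b c
    unfolding cimpl_def by blast
  ultimately show "tset X le R V \<phi> = X"
    using \<open>\<phi> \<in> ick_axioms\<close> unfolding ick_axioms_def Let_def
    by (auto simp: Iff_def Top_def impl_def)
qed

lemma valid_in_subst:
  assumes "general_frame X le R A" and "valid_in X le R A \<phi>"
  shows "valid_in X le R A (subst s \<phi>)"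
  unfolding valid_in_def tset_subst
proof (intro allI impI)
  fix V :: "nat \<Rightarrow> _" assume "\<forall>n. V n \<in> A"
  then have "\<forall>n. tset X le R V (s n) \<in> A"
    using tset_admissible[OF assms(1)] by blast
  then show "tset X le R (\<lambda>n. tset X le R V (s n)) \<phi> = X"
    by (rule valid_inD[OF assms(2)])
qed

lemma valid_in_mp:
  assumes gf: "general_frame X le R A"
    and "valid_in X le R A \<phi>" and "valid_in X le R A (Imp \<phi> \<psi>)"
  shows "valid_in X le R A \<psi>"
  unfolding valid_in_def
proof (intro allI impI)
  fix V :: "nat \<Rightarrow> _" assume V: "\<forall>n. V n \<in> A"
  then have "impl X le X (tset X le R V \<psi>) = X"
    using valid_inD[OF assms(2) V] valid_inD[OF assms(3) V] by simp
  then have "X \<subseteq> tset X le R V \<psi>"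
    using impl_eq_iff_subset[of X le, OF general_frame_refl[OF gf]] by blast
  then show "tset X le R V \<psi> = X"
    using tset_subset[OF gf V] by blast
qed

theorem ICK_sound:
  assumes "\<phi> \<in> ICK \<Gamma>" and gf: "general_frame X le R A"
    and "\<forall>\<gamma>\<in>\<Gamma>. valid_in X le R A \<gamma>"
  shows "valid_in X le R A \<phi>"
  using assms(1)
proof (induction rule: ICK.induct)
  case (ipc \<phi>)
  then show ?case using valid_in_ipc_axiom[OF gf] by blast
next
  case (gamma \<phi>)
  then show ?case using assms(3) by blast
next
  case (ick \<phi>)
  then show ?case using valid_in_ick_axiom[OF gf] by blast
next
  case (us \<phi> s)
  then show ?case using valid_in_subst[OF gf] by blast
next
  case (mp \<phi> \<psi>)
  then show ?case using valid_in_mp[OF gf] by blast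
next
  case (cong_left \<phi> \<psi> \<chi>)
  then show ?case unfolding valid_in_Iff[OF gf] by simp
next
  case (cong_right \<phi> \<psi> \<chi>)
  then show ?case unfolding valid_in_Iff[OF gf] by simp
qed

section \<open>Prime theories and Lindenbaum's lemma\<close>

definition prime_theory :: "fm set \<Rightarrow> fm set \<Rightarrow> bool" where
  "prime_theory \<Gamma> D \<longleftrightarrow> (\<forall>\<phi>. derives \<Gamma> D \<phi> \<longrightarrow> \<phi> \<in> D) \<and> Bot \<notin> D \<and>
     (\<forall>a b. Or a b \<in> D \<longrightarrow> a \<in> D \<or> b \<in> D)"

lemma prime_theory_derives: "prime_theory \<Gamma> D \<Longrightarrow> derives \<Gamma> D \<phi> \<Longrightarrow> \<phi> \<in> D"
  unfolding prime_theory_def by blast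

lemma prime_theory_ICK: "prime_theory \<Gamma> D \<Longrightarrow> \<phi> \<in> ICK \<Gamma> \<Longrightarrow> \<phi> \<in> D"
  using prime_theory_derives derives.ICK by blast

lemma prime_theory_ICK_mp: "prime_theory \<Gamma> D \<Longrightarrow> Imp a b \<in> ICK \<Gamma> \<Longrightarrow> a \<in> D \<Longrightarrow> b \<in> D"
  by (meson derives.hyp derives_ICK_mp prime_theory_derives)

lemma prime_theory_mp: "prime_theory \<Gamma> D \<Longrightarrow> Imp a b \<in> D \<Longrightarrow> a \<in> D \<Longrightarrow> b \<in> D"
  by (meson derives.hyp derives.mp prime_theory_derives)

lemma prime_theory_And_iff:
  assumes D: "prime_theory \<Gamma> D"
  shows "And a b \<in> D \<longleftrightarrow> a \<in> D \<and> b \<in> D"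
proof
  assume "a \<in> D \<and> b \<in> D"
  then have "derives \<Gamma> D (And a b)"
    by (meson ICK_conjI derives.hyp derives.mp derives_ICK_mp)
  with D show "And a b \<in> D"
    by (rule prime_theory_derives)
qed (use prime_theory_ICK_mp[OF D ICK_conj1] prime_theory_ICK_mp[OF D ICK_conj2] in blast)

lemma prime_theory_Or_iff: "prime_theory \<Gamma> D \<Longrightarrow> Or a b \<in> D \<longleftrightarrow> a \<in> D \<or> b \<in> D"
  using prime_theory_ICK_mp[OF _ ICK_disj1] prime_theory_ICK_mp[OF _ ICK_disj2]
  unfolding prime_theory_def by blast

lemma not_derives_Union_chain:
  assumes "subset.chain {T. \<not> derives \<Gamma> T \<chi>} C" and "C \<noteq> {}"
  shows "\<not> derives \<Gamma> (\<Union>C) \<chi>"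
proof
  assume "derives \<Gamma> (\<Union>C) \<chi>"
  obtain H where "finite H" "H \<subseteq> \<Union>C" "derives \<Gamma> H \<chi>"
    using derives_finite_subset[OF \<open>derives \<Gamma> (\<Union>C) \<chi>\<close>] by blast
  moreover obtain B where "B \<in> C" "H \<subseteq> B"
    using finite_subset_Union_chain[OF \<open>finite H\<close> \<open>H \<subseteq> \<Union>C\<close> assms(2,1)] .
  ultimately have "derives \<Gamma> B \<chi>"
    using derives_mono by blast
  moreover have "\<not> derives \<Gamma> B \<chi>"
    using assms(1) \<open>B \<in> C\<close> unfolding subset.chain_def by blast
  ultimately show False
    by contradiction
qed

text \<open>A set that is maximal among those not deriving \<open>\<chi>\<close> is a prime theory: by the deduction
  theorem it derives \<open>Imp \<phi> \<chi>\<close> for every \<open>\<phi>\<close> outside it, which rules out deriving such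
  a \<open>\<phi>\<close>, containing \<open>Bot\<close>, or containing a disjunction with both disjuncts outside.\<close>

lemma maximal_not_derives_prime_theory:
  assumes M: "\<not> derives \<Gamma> M \<chi>"
    and maximal: "\<And>\<phi>. \<phi> \<notin> M \<Longrightarrow> derives \<Gamma> (insert \<phi> M) \<chi>"
  shows "prime_theory \<Gamma> M"
  unfolding prime_theory_def
proof (intro conjI allI impI)
  have outside: "derives \<Gamma> M (Imp \<phi> \<chi>)" if "\<phi> \<notin> M" for \<phi>
    using maximal[OF that] by (rule derives_deduction)
  show "\<phi> \<in> M" if "derives \<Gamma> M \<phi>" for \<phi>
    using M derives.mp[OF that outside] by blast
  show "Bot \<notin> M"
    using M derives_ICK_mp[OF ICK_Bot derives.hyp] by blast
  show "a \<in> M \<or> b \<in> M" if "Or a b \<in> M" for a b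
  proof (rule ccontr)
    assume "\<not> (a \<in> M \<or> b \<in> M)"
    then have "derives \<Gamma> M (Imp (Or a b) \<chi>)"
      using derives.mp[OF outside[of b] derives.mp[OF outside[of a] derives.ICK[OF ICK_disjE]]]
      by blast
    then show False
      using M derives.mp[OF derives.hyp[OF that]] by blast
  qed
qed

lemma lindenbaum:
  assumes "\<not> derives \<Gamma> S \<chi>"
  obtains D where "prime_theory \<Gamma> D" "S \<subseteq> D" "\<chi> \<notin> D"
proof -
  let ?F = "{T. S \<subseteq> T \<and> \<not> derives \<Gamma> T \<chi>}"
  have "\<Union>C \<in> ?F" if "C \<noteq> {}" "subset.chain ?F C" for C
  proof -
    have "subset.chain {T. \<not> derives \<Gamma> T \<chi>} C"
      using that(2) unfolding subset.chain_def by blast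
    then have "\<not> derives \<Gamma> (\<Union>C) \<chi>"
      using not_derives_Union_chain that(1) by blast
    moreover have "S \<subseteq> \<Union>C"
      using that unfolding subset.chain_def by blast
    ultimately show ?thesis
      by blast
  qed
  moreover have "S \<in> ?F"
    using assms by blast
  ultimately obtain M where "M \<in> ?F" and maximal: "\<forall>T\<in>?F. M \<subseteq> T \<longrightarrow> T = M"
    using subset_Zorn_nonempty[of ?F] by blast
  have "prime_theory \<Gamma> M"
  proof (rule maximal_not_derives_prime_theory)
    show "\<not> derives \<Gamma> M \<chi>"
      using \<open>M \<in> ?F\<close> by blast
    show "derives \<Gamma> (insert \<phi> M) \<chi>" if "\<phi> \<notin> M" for \<phi>
    proof (rule ccontr)
      assume "\<not> derives \<Gamma> (insert \<phi> M) \<chi>"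
      then have "insert \<phi> M \<in> ?F"
        using \<open>M \<in> ?F\<close> by blast
      then show False
        using maximal that by blast
    qed
  qed
  with \<open>M \<in> ?F\<close> show thesis
    using that derives.hyp by blast
qed

section \<open>The canonical general frame\<close>

definition canon_worlds :: "fm set \<Rightarrow> fm set set" where
  "canon_worlds \<Gamma> = {D. prime_theory \<Gamma> D}"

definition canon_tset :: "fm set \<Rightarrow> fm \<Rightarrow> fm set set" where
  "canon_tset \<Gamma> \<psi> = {D \<in> canon_worlds \<Gamma>. \<psi> \<in> D}"

definition canon_admissible :: "fm set \<Rightarrow> fm set set set" where
  "canon_admissible \<Gamma> = range (canon_tset \<Gamma>)"

definition canon_rel :: "fm set \<Rightarrow> fm set set \<Rightarrow> fm set \<Rightarrow> fm set \<Rightarrow> bool" where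
  "canon_rel \<Gamma> a D E \<longleftrightarrow> D \<in> canon_worlds \<Gamma> \<and> E \<in> canon_worlds \<Gamma> \<and>
     (\<forall>\<psi> \<chi>. canon_tset \<Gamma> \<psi> = a \<and> Cond \<psi> \<chi> \<in> D \<longrightarrow> \<chi> \<in> E)"

lemma canon_tset_subset_imp_ICK:
  assumes "canon_tset \<Gamma> a \<subseteq> canon_tset \<Gamma> b"
  shows "Imp a b \<in> ICK \<Gamma>"
proof (rule ccontr)
  assume "Imp a b \<notin> ICK \<Gamma>"
  then have "\<not> derives \<Gamma> {a} b"
    using derives_ImpI by blast
  then obtain E where "prime_theory \<Gamma> E" "{a} \<subseteq> E" "b \<notin> E"
    by (rule lindenbaum)
  then show False
    using assms unfolding canon_tset_def canon_worlds_def by auto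
qed

lemma canon_tset_eq_worlds_iff: "canon_tset \<Gamma> \<phi> = canon_worlds \<Gamma> \<longleftrightarrow> \<phi> \<in> ICK \<Gamma>"
proof
  assume "canon_tset \<Gamma> \<phi> = canon_worlds \<Gamma>"
  show "\<phi> \<in> ICK \<Gamma>"
  proof (rule ccontr)
    assume "\<phi> \<notin> ICK \<Gamma>"
    then have "\<not> derives \<Gamma> {} \<phi>"
      using derives_empty_iff by blast
    then obtain E where "prime_theory \<Gamma> E" "\<phi> \<notin> E"
      by (rule lindenbaum)
    then show False
      using \<open>canon_tset \<Gamma> \<phi> = canon_worlds \<Gamma>\<close> unfolding canon_tset_def canon_worlds_def by auto
  qed
qed (auto simp: canon_tset_def canon_worlds_def prime_theory_ICK)

lemma canon_tset_Bot: "canon_tset \<Gamma> Bot = {}"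
  unfolding canon_tset_def canon_worlds_def prime_theory_def by auto

lemma canon_tset_Top: "canon_tset \<Gamma> Top = canon_worlds \<Gamma>"
  using canon_tset_eq_worlds_iff ICK_imp_refl unfolding Top_def by blast

lemma canon_tset_And: "canon_tset \<Gamma> (And a b) = canon_tset \<Gamma> a \<inter> canon_tset \<Gamma> b"
  unfolding canon_tset_def canon_worlds_def using prime_theory_And_iff by blast

lemma canon_tset_Or: "canon_tset \<Gamma> (Or a b) = canon_tset \<Gamma> a \<union> canon_tset \<Gamma> b"
  unfolding canon_tset_def canon_worlds_def using prime_theory_Or_iff by blast

lemma canon_tset_Imp:
  "canon_tset \<Gamma> (Imp a b) = impl (canon_worlds \<Gamma>) (\<subseteq>) (canon_tset \<Gamma> a) (canon_tset \<Gamma> b)"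
proof -
  have "Imp a b \<in> D \<longleftrightarrow> (\<forall>E\<in>canon_worlds \<Gamma>. D \<subseteq> E \<and> a \<in> E \<longrightarrow> b \<in> E)"
    if D: "prime_theory \<Gamma> D" for D
  proof
    assume "Imp a b \<in> D"
    then show "\<forall>E\<in>canon_worlds \<Gamma>. D \<subseteq> E \<and> a \<in> E \<longrightarrow> b \<in> E"
      unfolding canon_worlds_def using prime_theory_mp by blast
  next
    assume extensions: "\<forall>E\<in>canon_worlds \<Gamma>. D \<subseteq> E \<and> a \<in> E \<longrightarrow> b \<in> E"
    have "derives \<Gamma> (insert a D) b"
    proof (rule ccontr)
      assume "\<not> derives \<Gamma> (insert a D) b"
      then obtain E where "prime_theory \<Gamma> E" "insert a D \<subseteq> E" "b \<notin> E"
        by (rule lindenbaum)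
      then show False
        using extensions unfolding canon_worlds_def by blast
    qed
    then show "Imp a b \<in> D"
      using D derives_deduction prime_theory_derives by blast
  qed
  then show ?thesis
    unfolding canon_tset_def impl_def canon_worlds_def by auto
qed

lemma Cond_mem_prime_theory:
  assumes D: "prime_theory \<Gamma> D" and "derives \<Gamma> {\<chi>. Cond a \<chi> \<in> D} b"
  shows "Cond a b \<in> D"
  using assms(2)
proof (induction rule: derives.induct)
  case (ICK \<phi>)
  then show ?case using ICK_Cond_nec prime_theory_ICK[OF D] by blast
next
  case (hyp \<phi>)
  then show ?case by simp
next
  case (mp \<phi> \<psi>)
  then have "Cond a (And \<phi> (Imp \<phi> \<psi>)) \<in> D"
    using prime_theory_And_iff[OF D] prime_theory_ICK_mp[OF D ICK_IffD2[OF ICK_Cond_And]] by blast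
  then show ?case
    using prime_theory_ICK_mp[OF D ICK_Cond_mono[OF ICK_mp_conj]] by blast
qed

lemma canon_tset_Cond:
  "canon_tset \<Gamma> (Cond a b) = cimpl (canon_worlds \<Gamma>) (canon_rel \<Gamma>) (canon_tset \<Gamma> a) (canon_tset \<Gamma> b)"
proof -
  have "Cond a b \<in> D \<longleftrightarrow> (\<forall>E. canon_rel \<Gamma> (canon_tset \<Gamma> a) D E \<longrightarrow> E \<in> canon_tset \<Gamma> b)"
    if D: "prime_theory \<Gamma> D" for D
  proof
    assume "Cond a b \<in> D"
    then show "\<forall>E. canon_rel \<Gamma> (canon_tset \<Gamma> a) D E \<longrightarrow> E \<in> canon_tset \<Gamma> b"
      unfolding canon_rel_def canon_tset_def by blast
  next
    assume sees_b: "\<forall>E. canon_rel \<Gamma> (canon_tset \<Gamma> a) D E \<longrightarrow> E \<in> canon_tset \<Gamma> b"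
    show "Cond a b \<in> D"
    proof (rule ccontr)
      assume "Cond a b \<notin> D"
      then have "\<not> derives \<Gamma> {\<chi>. Cond a \<chi> \<in> D} b"
        using Cond_mem_prime_theory[OF D] by blast
      then obtain E where E: "prime_theory \<Gamma> E" "{\<chi>. Cond a \<chi> \<in> D} \<subseteq> E" "b \<notin> E"
        by (rule lindenbaum)
      have "\<chi> \<in> E" if "canon_tset \<Gamma> \<psi> = canon_tset \<Gamma> a" "Cond \<psi> \<chi> \<in> D" for \<psi> \<chi>
      proof -
        have "Iff \<psi> a \<in> ICK \<Gamma>"
          using that(1) canon_tset_subset_imp_ICK ICK_IffI by simp
        then have "Cond a \<chi> \<in> D"
          using that(2) prime_theory_ICK_mp[OF D ICK_IffD1[OF ICK.cong_left]] by blast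
        then show ?thesis
          using E(2) by blast
      qed
      then have "canon_rel \<Gamma> (canon_tset \<Gamma> a) D E"
        using D E(1) unfolding canon_rel_def canon_worlds_def by blast
      then show False
        using sees_b E(3) unfolding canon_tset_def by blast
    qed
  qed
  then show ?thesis
    unfolding cimpl_def canon_tset_def[of \<Gamma> "Cond a b"] canon_worlds_def by blast
qed

lemma tset_canon:
  "tset (canon_worlds \<Gamma>) (\<subseteq>) (canon_rel \<Gamma>) (\<lambda>n. canon_tset \<Gamma> (s n)) \<phi> = canon_tset \<Gamma> (subst s \<phi>)"
  by (induction \<phi>)
    (simp_all add: canon_tset_Bot canon_tset_And canon_tset_Or canon_tset_Imp canon_tset_Cond)

lemma canon_general_frame:
  "general_frame (canon_worlds \<Gamma>) (\<subseteq>) (canon_rel \<Gamma>) (canon_admissible \<Gamma>)"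
  unfolding general_frame_def
proof (intro conjI)
  show "\<forall>a\<in>canon_admissible \<Gamma>. upset (canon_worlds \<Gamma>) (\<subseteq>) a"
    unfolding canon_admissible_def upset_def canon_tset_def by auto
  show "canon_worlds \<Gamma> \<in> canon_admissible \<Gamma>" "{} \<in> canon_admissible \<Gamma>"
    using canon_tset_Top canon_tset_Bot unfolding canon_admissible_def by (metis rangeI)+
  show "\<forall>a\<in>canon_admissible \<Gamma>. \<forall>b\<in>canon_admissible \<Gamma>.
      a \<inter> b \<in> canon_admissible \<Gamma> \<and> a \<union> b \<in> canon_admissible \<Gamma> \<and>
      impl (canon_worlds \<Gamma>) (\<subseteq>) a b \<in> canon_admissible \<Gamma> \<and>
      cimpl (canon_worlds \<Gamma>) (canon_rel \<Gamma>) a b \<in> canon_admissible \<Gamma>"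
    unfolding canon_admissible_def
    by (auto simp flip: canon_tset_And canon_tset_Or canon_tset_Imp canon_tset_Cond)
  show "\<forall>a\<in>canon_admissible \<Gamma>. \<forall>x y. canon_rel \<Gamma> a x y \<longrightarrow> x \<in> canon_worlds \<Gamma> \<and> y \<in> canon_worlds \<Gamma>"
    unfolding canon_rel_def by auto
  show "\<forall>a\<in>canon_admissible \<Gamma>. \<forall>x\<in>canon_worlds \<Gamma>. \<forall>y\<in>canon_worlds \<Gamma>. \<forall>z\<in>canon_worlds \<Gamma>.
      x \<subseteq> y \<and> canon_rel \<Gamma> a y z \<longrightarrow> (\<exists>w\<in>canon_worlds \<Gamma>. canon_rel \<Gamma> a x w \<and> w \<subseteq> z)"
    \<comment> \<open>\<open>canon_rel \<Gamma> a\<close> is antitone in its first world, so \<open>w = z\<close> works\<close>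
    unfolding canon_rel_def by blast
qed auto

lemma canon_valid_in_ICK:
  assumes "\<phi> \<in> ICK \<Gamma>"
  shows "valid_in (canon_worlds \<Gamma>) (\<subseteq>) (canon_rel \<Gamma>) (canon_admissible \<Gamma>) \<phi>"
  unfolding valid_in_def
proof (intro allI impI)
  fix V :: "nat \<Rightarrow> fm set set" assume "\<forall>n. V n \<in> canon_admissible \<Gamma>"
  then have "\<forall>n. \<exists>\<psi>. V n = canon_tset \<Gamma> \<psi>"
    unfolding canon_admissible_def by blast
  then obtain s where "V = (\<lambda>n. canon_tset \<Gamma> (s n))"
    by metis
  moreover have "subst s \<phi> \<in> ICK \<Gamma>"
    using assms by (rule ICK.us)
  ultimately show "tset (canon_worlds \<Gamma>) (\<subseteq>) (canon_rel \<Gamma>) V \<phi> = canon_worlds \<Gamma>"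
    by (simp add: tset_canon canon_tset_eq_worlds_iff)
qed

theorem ICK_complete:
  assumes "\<forall>(X :: fm set set) le R A. general_frame X le R A \<and> (\<forall>\<gamma>\<in>\<Gamma>. valid_in X le R A \<gamma>)
    \<longrightarrow> valid_in X le R A \<phi>"
  shows "\<phi> \<in> ICK \<Gamma>"
proof -
  have "valid_in (canon_worlds \<Gamma>) (\<subseteq>) (canon_rel \<Gamma>) (canon_admissible \<Gamma>) \<phi>"
    using assms[rule_format, OF conjI[OF canon_general_frame]] canon_valid_in_ICK ICK.gamma
    by blast
  moreover have "\<forall>n. canon_tset \<Gamma> (Var n) \<in> canon_admissible \<Gamma>"
    unfolding canon_admissible_def by blast
  ultimately have
    "tset (canon_worlds \<Gamma>) (\<subseteq>) (canon_rel \<Gamma>) (\<lambda>n. canon_tset \<Gamma> (Var n)) \<phi> = canon_worlds \<Gamma>"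
    by (rule valid_inD)
  moreover have "subst Var \<phi> = \<phi>"
    by (induction \<phi>) auto
  ultimately show ?thesis
    by (simp add: tset_canon canon_tset_eq_worlds_iff)
qed

theorem theorem4p25:
  fixes \<Gamma> :: "fm set" and \<phi> :: fm
  shows "(\<phi> \<in> ICK \<Gamma> \<longrightarrow>
           (\<forall>(X :: 'w set) le R A. general_frame X le R A \<and> (\<forall>\<gamma>\<in>\<Gamma>. valid_in X le R A \<gamma>)
              \<longrightarrow> valid_in X le R A \<phi>))
       \<and> ((\<forall>(X :: fm set set) le R A. general_frame X le R A \<and> (\<forall>\<gamma>\<in>\<Gamma>. valid_in X le R A \<gamma>)
              \<longrightarrow> valid_in X le R A \<phi>)
          \<longrightarrow> \<phi> \<in> ICK \<Gamma>)"
  using ICK_sound ICK_complete by blast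

end
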